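(* Let $q$ be a prime power and $k\ge3$, $h\ge2$ integers, and $1\le u_0<u_1\le\dots\le u_h$ integers. Let $U_0,U_1,\dots,U_h$ be subspaces of $\mathbf F_q^k$ of dimensions $u_0,u_1,\dots,u_h$ with $U_i\cap U_j=U_0$ for all distinct $i,j\in\{1,\dots,h\}$, and assume $q^k-q^{k-1}>q^{u_0}-1+\sum_{i=1}^h(q^{u_i}-q^{u_0})$. Let $U$ be the set of nonzero vectors of $\mathbf F_q^k$ not in $U_1\cup\dots\cup U_h$, let $\widetilde G$ be a matrix whose columns consist of exactly one representative of each class $\{\lambda\mathbf v:\lambda\in\mathbf F_q^*\}$, $\mathbf v\in U$, and let $\mathbf C$ be the linear code with generator matrix $\widetilde G$. Then $\mathbf C$ is a linear $\big[\frac{(q^k-q^{u_0})-\sum_{i=1}^h(q^{u_i}-q^{u_0})}{q-1},\,k,\,d\big]_q$ code with $d\ge q^{k-1}-\sum_{i=1}^hq^{u_i-1}$. *)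

theory Defs
  imports Complex_Main "HOL-Library.Function_Algebras"
begin

text \<open>Vectors of F^k are modelled as functions nat => F that vanish outside {..<k};
  the ambient vector space is the space of all functions nat => F with pointwise operations.\<close>

definition fscale :: "'a::field \<Rightarrow> (nat \<Rightarrow> 'a) \<Rightarrow> (nat \<Rightarrow> 'a)" where
  "fscale c v = (\<lambda>i. c * v i)"

interpretation fvs: vector_space fscale
  by unfold_locales (auto simp: fscale_def fun_eq_iff algebra_simps)

definition vecs :: "nat \<Rightarrow> (nat \<Rightarrow> 'a::field) set" where
  "vecs k = {v. \<forall>i\<ge>k. v i = 0}"

text \<open>Linear code of length n (number of columns) generated by the k x n matrix whose
  j-th column is cols ! j: all codewords x G, x in F^k.\<close>
definition gen_code :: "nat \<Rightarrow> (nat \<Rightarrow> 'a::field) list \<Rightarrow> (nat \<Rightarrow> 'a) set" where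
  "gen_code k cols =
     {(\<lambda>j. if j < length cols then (\<Sum>i<k. x i * (cols ! j) i) else 0) | x. x \<in> vecs k}"

definition hamming_dist :: "nat \<Rightarrow> (nat \<Rightarrow> 'a) \<Rightarrow> (nat \<Rightarrow> 'a) \<Rightarrow> nat" where
  "hamming_dist n c c' = card {j. j < n \<and> c j \<noteq> c' j}"

definition min_dist :: "nat \<Rightarrow> (nat \<Rightarrow> 'a) set \<Rightarrow> nat" where
  "min_dist n C = Min {hamming_dist n c c' | c c'. c \<in> C \<and> c' \<in> C \<and> c \<noteq> c'}"

end

theory Submission
  imports Defs "HOL-Library.FuncSet" "HOL-Library.Cardinality"
begin

text \<open>The columns contain every projective point of U = F^k - X, where
  X = U_1 \<union> ... \<union> U_h, exactly once, so counting vectors of U counts columns q - 1 times.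
  Hence the length is (q^k - |X|) / (q - 1), with |X| read off the sunflower structure of the
  U_i, and the codeword of a message y has weight |{v \<in> U. y \<cdot> v \<noteq> 0}| / (q - 1).
  A linear functional that does not vanish on a d-dimensional space is nonzero at exactly
  (q - 1) q^(d-1) of its vectors; applied to F^k and to each U_i this bounds that weight from
  below by q^(k-1) - \<Sum> q^(u_i - 1). Since 0 \<in> X, the hypothesis |X| - 1 < q^k - q^(k-1)
  leaves a vector of U off every hyperplane y \<cdot> v = 0, so the encoding is injective and the
  code has dimension k.\<close>

lemma two_le_card_field: "2 \<le> CARD('a::{field,finite})"
proof -
  have "card {0::'a, 1} \<le> CARD('a)" by (rule card_mono) auto
  then show ?thesis by simp
qed

lemma bij_betw_span_insert:
  fixes b :: "nat \<Rightarrow> 'a::field"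
  assumes b: "b \<notin> fvs.span B"
  shows "bij_betw (\<lambda>(c, v). fscale c b + v) (UNIV \<times> fvs.span B) (fvs.span (insert b B))"
proof (rule bij_betw_imageI)
  show "inj_on (\<lambda>(c, v). fscale c b + v) (UNIV \<times> fvs.span B)"
  proof (rule inj_onI, clarify)
    fix c v c' v'
    assume v: "v \<in> fvs.span B" "v' \<in> fvs.span B" and "fscale c b + v = fscale c' b + v'"
    then have diff: "fscale (c - c') b = v' - v"
      by (auto simp: fscale_def fun_eq_iff algebra_simps)
    have "c = c'"
    proof (rule ccontr)
      assume "c \<noteq> c'"
      then have "b = fscale (inverse (c - c')) (v' - v)"
        by (simp add: diff [symmetric] fscale_def fun_eq_iff)
      also have "\<dots> \<in> fvs.span B"
        using v by (intro fvs.span_scale fvs.span_diff)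
      finally show False
        using b by contradiction
    qed
    with diff show "c = c' \<and> v = v'"
      by (simp add: fscale_def fun_eq_iff)
  qed
  have "b \<in> fvs.span (insert b B)" "fvs.span B \<subseteq> fvs.span (insert b B)"
    by (simp_all add: fvs.span_base fvs.span_mono subset_insertI)
  then show "(\<lambda>(c, v). fscale c b + v) ` (UNIV \<times> fvs.span B) = fvs.span (insert b B)"
    by (force simp: fvs.span_breakdown_eq intro: fvs.span_add fvs.span_scale)
qed

lemma card_span_independent:
  fixes B :: "(nat \<Rightarrow> 'a::{field,finite}) set"
  assumes "finite B" "fvs.independent B"
  shows "finite (fvs.span B) \<and> card (fvs.span B) = CARD('a) ^ card B"
  using assms
proof (induction B rule: finite_induct)
  case empty
  then show ?case by simp
next
  case (insert b B)
  then have "finite (fvs.span B)" "card (fvs.span B) = CARD('a) ^ card B"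
    and "b \<notin> fvs.span B"
    by (auto simp: fvs.independent_insert)
  with bij_betw_span_insert [OF \<open>b \<notin> fvs.span B\<close>] show ?case
    using insert.hyps
    by (simp add: bij_betw_finite [symmetric] bij_betw_same_card [symmetric] card_cartesian_product)
qed

lemma card_subspace:
  fixes S :: "(nat \<Rightarrow> 'a::{field,finite}) set"
  assumes "fvs.subspace S" "finite S"
  shows "card S = CARD('a) ^ fvs.dim S"
proof -
  obtain B where B: "B \<subseteq> S" "fvs.independent B" "S \<subseteq> fvs.span B" "card B = fvs.dim S"
    by (rule fvs.basis_exists)
  then have "fvs.span B = S"
    using assms by (intro fvs.span_subspace) auto
  moreover have "finite B"
    using B assms finite_subset by blast
  ultimately show ?thesis
    using card_span_independent [of B] B by auto
qed

lemma subspace_vecs: "fvs.subspace (vecs k)"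
  by (auto simp: fvs.subspace_def vecs_def fscale_def)

lemma bij_betw_restrict_vecs: "bij_betw (\<lambda>v. restrict v {..<k}) (vecs k) ({..<k} \<rightarrow>\<^sub>E UNIV)"
  by (rule bij_betw_byWitness [where f' = "\<lambda>g i. if i < k then g i else 0"])
    (auto simp: vecs_def fun_eq_iff PiE_def extensional_def)

lemma finite_vecs: "finite (vecs k :: (nat \<Rightarrow> 'a::{field,finite}) set)"
  using bij_betw_finite [OF bij_betw_restrict_vecs [where 'a='a]] by (simp add: finite_PiE)

lemma card_vecs: "card (vecs k :: (nat \<Rightarrow> 'a::{field,finite}) set) = CARD('a) ^ k"
  using bij_betw_same_card [OF bij_betw_restrict_vecs [where 'a='a]] by (simp add: card_PiE)

lemma dim_vecs: "fvs.dim (vecs k :: (nat \<Rightarrow> 'a::{field,finite}) set) = k"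
  using card_subspace [OF subspace_vecs finite_vecs, of k, where 'a='a] two_le_card_field [where 'a='a]
  by (simp add: card_vecs power_inject_exp)

lemma card_subspace_eq_card_kernel:
  fixes f :: "(nat \<Rightarrow> 'a::{field,finite}) \<Rightarrow> 'a"
  assumes add: "\<And>v w. f (v + w) = f v + f w" and scale: "\<And>c v. f (fscale c v) = c * f v"
    and W: "fvs.subspace W" and w: "w \<in> W" "f w \<noteq> 0"
  shows "card W = CARD('a) * card {v\<in>W. f v = 0}"
proof -
  let ?K = "{v\<in>W. f v = 0}"
  define g where "g = (\<lambda>(c, v). v + fscale c w)"
  have "bij_betw g (UNIV \<times> ?K) W"
  proof (rule bij_betw_imageI)
    show "inj_on g (UNIV \<times> ?K)"
    proof (rule inj_onI, clarify)
      fix c v c' v' assume K: "v \<in> W" "f v = 0" "v' \<in> W" "f v' = 0" and eq: "g (c, v) = g (c', v')"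
      from K have "f (g (c, v)) = c * f w" "f (g (c', v')) = c' * f w"
        by (simp_all add: g_def add scale)
      with w eq show "c = c' \<and> v = v'"
        by (simp add: g_def)
    qed
    show "g ` (UNIV \<times> ?K) = W"
    proof (intro equalityI subsetI)
      fix x assume x: "x \<in> W"
      define c where "c = f x / f w"
      have "f (x - fscale c w) = 0"
        using add [of "x - fscale c w" "fscale c w"] w by (simp add: scale c_def)
      moreover have "x - fscale c w \<in> W"
        using W x w by (simp add: fvs.subspace_diff fvs.subspace_scale)
      ultimately show "x \<in> g ` (UNIV \<times> ?K)"
        by (intro image_eqI [of _ _ "(c, x - fscale c w)"]) (auto simp: g_def)
    qed (use W w in \<open>auto simp: g_def intro: fvs.subspace_add fvs.subspace_scale\<close>)
  qed
  then show ?thesis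
    by (simp add: bij_betw_same_card [symmetric] card_cartesian_product)
qed

lemma card_nonvanishing_functional:
  fixes f :: "(nat \<Rightarrow> 'a::{field,finite}) \<Rightarrow> 'a"
  assumes add: "\<And>v w. f (v + w) = f v + f w" and scale: "\<And>c v. f (fscale c v) = c * f v"
    and W: "fvs.subspace W" "finite W" and w: "w \<in> W" "f w \<noteq> 0"
  shows "card {v\<in>W. f v \<noteq> 0} = (CARD('a) - 1) * CARD('a) ^ (fvs.dim W - 1)"
proof -
  let ?K = "{v\<in>W. f v = 0}"
  have card_W: "CARD('a) ^ fvs.dim W = CARD('a) * card ?K"
    using card_subspace [OF W] card_subspace_eq_card_kernel [OF add scale W(1) w] by simp
  have q: "2 \<le> CARD('a)"
    by (rule two_le_card_field)
  have "fvs.dim W \<noteq> 0"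
  proof
    assume "fvs.dim W = 0"
    with card_W have "CARD('a) * card ?K = 1"
      by simp
    with q show False
      by simp
  qed
  then have "CARD('a) * card ?K = CARD('a) * CARD('a) ^ (fvs.dim W - 1)"
    using card_W by (simp flip: power_Suc)
  with q have card_K: "card ?K = CARD('a) ^ (fvs.dim W - 1)"
    by simp
  have "{v\<in>W. f v \<noteq> 0} = W - ?K"
    by auto
  then have "card {v\<in>W. f v \<noteq> 0} = card W - card ?K"
    using W by (simp add: card_Diff_subset)
  then show ?thesis
    using card_W card_K card_subspace [OF W] by (simp add: diff_mult_distrib)
qed

lemma card_nonvanishing_functional_le:
  fixes f :: "(nat \<Rightarrow> 'a::{field,finite}) \<Rightarrow> 'a"
  assumes "\<And>v w. f (v + w) = f v + f w" "\<And>c v. f (fscale c v) = c * f v"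
    and "fvs.subspace W" "finite W"
  shows "card {v\<in>W. f v \<noteq> 0} \<le> (CARD('a) - 1) * CARD('a) ^ (fvs.dim W - 1)"
proof (cases "\<exists>w\<in>W. f w \<noteq> 0")
  case True
  then show ?thesis
    using card_nonvanishing_functional [OF assms] by auto
next
  case False
  then have "{v\<in>W. f v \<noteq> 0} = {}"
    by auto
  then show ?thesis
    by (simp only: card.empty zero_le)
qed

definition dot :: "nat \<Rightarrow> (nat \<Rightarrow> 'a::field) \<Rightarrow> (nat \<Rightarrow> 'a) \<Rightarrow> 'a" where
  "dot k y v = (\<Sum>i<k. y i * v i)"

lemma dot_add_left: "dot k (x + y) v = dot k x v + dot k y v"
  by (simp add: dot_def algebra_simps sum.distrib)

lemma dot_diff_left: "dot k (x - y) v = dot k x v - dot k y v"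
  by (simp add: dot_def algebra_simps sum_subtractf)

lemma dot_add_right: "dot k y (v + w) = dot k y v + dot k y w"
  by (simp add: dot_def algebra_simps sum.distrib)

lemma dot_scale_left: "dot k (fscale c y) v = c * dot k y v"
  by (simp add: dot_def fscale_def sum_distrib_left algebra_simps)

lemma dot_scale_right: "dot k y (fscale c v) = c * dot k y v"
  by (simp add: dot_def fscale_def sum_distrib_left algebra_simps)

lemma card_nonvanishing_dot_le:
  fixes W :: "(nat \<Rightarrow> 'a::{field,finite}) set"
  assumes "fvs.subspace W" "W \<subseteq> vecs k"
  shows "card {v\<in>W. dot k y v \<noteq> 0} \<le> (CARD('a) - 1) * CARD('a) ^ (fvs.dim W - 1)"
  using assms finite_subset [OF _ finite_vecs]
  by (intro card_nonvanishing_functional_le) (auto simp: dot_add_right dot_scale_right)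

lemma card_nonvanishing_dot_vecs:
  fixes y :: "nat \<Rightarrow> 'a::{field,finite}"
  assumes "y \<in> vecs k" "y \<noteq> 0"
  shows "card {v\<in>vecs k. dot k y v \<noteq> 0} = (CARD('a) - 1) * CARD('a) ^ (k - 1)"
proof -
  obtain i where i: "y i \<noteq> 0"
    using assms by (auto simp: fun_eq_iff)
  with assms have "i < k"
    by (auto simp: vecs_def not_less [symmetric])
  define e where "e = (\<lambda>j. if j = i then 1 else 0 :: 'a)"
  have "e \<in> vecs k" "dot k y e = y i"
    using \<open>i < k\<close> by (auto simp: vecs_def e_def dot_def if_distrib cong: if_cong)
  with i show ?thesis
    using card_nonvanishing_functional [OF _ _ subspace_vecs finite_vecs, of "dot k y" e]
    by (simp add: dot_add_right dot_scale_right dim_vecs)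
qed

lemma card_nonvanishing_dot_UN_le:
  fixes W :: "'i \<Rightarrow> (nat \<Rightarrow> 'a::{field,finite}) set"
  assumes "finite I" "\<And>i. i \<in> I \<Longrightarrow> fvs.subspace (W i)" "\<And>i. i \<in> I \<Longrightarrow> W i \<subseteq> vecs k"
  shows "card {v\<in>\<Union>i\<in>I. W i. dot k y v \<noteq> 0} \<le>
           (\<Sum>i\<in>I. (CARD('a) - 1) * CARD('a) ^ (fvs.dim (W i) - 1))"
proof -
  have "{v\<in>\<Union>i\<in>I. W i. dot k y v \<noteq> 0} = (\<Union>i\<in>I. {v\<in>W i. dot k y v \<noteq> 0})"
    by blast
  then have "card {v\<in>\<Union>i\<in>I. W i. dot k y v \<noteq> 0} \<le> (\<Sum>i\<in>I. card {v\<in>W i. dot k y v \<noteq> 0})"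
    using card_UN_le [OF \<open>finite I\<close>] by simp
  also have "\<dots> \<le> (\<Sum>i\<in>I. (CARD('a) - 1) * CARD('a) ^ (fvs.dim (W i) - 1))"
    using assms(2,3) by (intro sum_mono card_nonvanishing_dot_le)
  finally show ?thesis .
qed

definition encode :: "nat \<Rightarrow> (nat \<Rightarrow> 'a::field) list \<Rightarrow> (nat \<Rightarrow> 'a) \<Rightarrow> (nat \<Rightarrow> 'a)" where
  "encode k cols x = (\<lambda>j. if j < length cols then dot k x (cols ! j) else 0)"

lemma gen_code_eq_image: "gen_code k cols = encode k cols ` vecs k"
  unfolding gen_code_def encode_def dot_def by blast

lemma linear_encode: "Vector_Spaces.linear fscale fscale (encode k cols)"
  unfolding Vector_Spaces.linear_iff
  by (simp add: fvs.vector_space_axioms encode_def fun_eq_iff fscale_def dot_add_left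
      dot_scale_left [unfolded fscale_def])

lemma subspace_gen_code: "fvs.subspace (gen_code k cols)"
proof -
  interpret encode: Vector_Spaces.linear fscale fscale "encode k cols"
    by (rule linear_encode)
  show ?thesis
    unfolding gen_code_eq_image by (rule encode.subspace_image [OF subspace_vecs])
qed

lemma inj_on_encode_iff:
  "inj_on (encode k cols) (vecs k) \<longleftrightarrow>
     (\<forall>y\<in>vecs k. y \<noteq> 0 \<longrightarrow> (\<exists>j<length cols. dot k y (cols ! j) \<noteq> 0))"
proof -
  interpret encode: Vector_Spaces.linear fscale fscale "encode k cols"
    by (rule linear_encode)
  show ?thesis
    by (auto simp: encode.inj_on_iff_eq_0 [OF subspace_vecs] encode_def fun_eq_iff)
qed

lemma hamming_dist_encode:
  "hamming_dist (length cols) (encode k cols x) (encode k cols x') =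
     card {j. j < length cols \<and> dot k (x - x') (cols ! j) \<noteq> 0}"
  unfolding hamming_dist_def
  by (intro arg_cong [where f = card]) (auto simp: encode_def dot_diff_left)

lemma dim_gen_code:
  fixes cols :: "(nat \<Rightarrow> 'a::{field,finite}) list"
  assumes "inj_on (encode k cols) (vecs k)"
  shows "fvs.dim (gen_code k cols) = k"
proof -
  have "CARD('a) ^ fvs.dim (gen_code k cols) = CARD('a) ^ k"
    using card_subspace [OF subspace_gen_code, of k cols] assms
    by (simp add: gen_code_eq_image card_image finite_vecs card_vecs)
  then show ?thesis
    using two_le_card_field [where 'a='a] by (simp add: power_inject_exp)
qed

lemma min_dist_attained:
  assumes "c \<in> C" "c' \<in> C" "c \<noteq> c'"
  obtains c c' where "c \<in> C" "c' \<in> C" "c \<noteq> c'" "min_dist n C = hamming_dist n c c'"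
proof -
  let ?D = "{hamming_dist n c c' | c c'. c \<in> C \<and> c' \<in> C \<and> c \<noteq> c'}"
  have "?D \<subseteq> {..n}"
    by (auto simp: hamming_dist_def intro!: card_mono [of "{..<n}", simplified])
  then have "finite ?D"
    by (rule finite_subset) simp
  moreover have "?D \<noteq> {}"
    using assms by blast
  ultimately have "Min ?D \<in> ?D"
    by (rule Min_in)
  then show ?thesis
    using that by (auto simp: min_dist_def)
qed

lemma min_dist_gen_code_ge:
  fixes cols :: "(nat \<Rightarrow> 'a::{field,finite}) list" and d :: int
  assumes "k \<noteq> 0" and inj: "inj_on (encode k cols) (vecs k)"
    and weight: "\<And>y. y \<in> vecs k \<Longrightarrow> y \<noteq> 0 \<Longrightarrow>
                   d \<le> int (card {j. j < length cols \<and> dot k y (cols ! j) \<noteq> 0})"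
  shows "d \<le> int (min_dist (length cols) (gen_code k cols))"
proof -
  define e where "e = (\<lambda>j::nat. if j = 0 then 1 else 0 :: 'a)"
  have e: "e \<in> vecs k" "e \<noteq> 0" "0 \<in> vecs k"
    using \<open>k \<noteq> 0\<close> by (auto simp: e_def vecs_def fun_eq_iff)
  then have "encode k cols e \<noteq> encode k cols 0"
    using inj by (auto dest: inj_onD)
  moreover have "encode k cols e \<in> gen_code k cols" "encode k cols 0 \<in> gen_code k cols"
    unfolding gen_code_eq_image using e by (blast intro: imageI)+
  ultimately obtain c c' where "c \<in> gen_code k cols" "c' \<in> gen_code k cols" "c \<noteq> c'"
    and "min_dist (length cols) (gen_code k cols) = hamming_dist (length cols) c c'"
    by (metis min_dist_attained)
  then obtain x x' where "x \<in> vecs k" "x' \<in> vecs k" "x \<noteq> x'"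
    and "min_dist (length cols) (gen_code k cols) =
           hamming_dist (length cols) (encode k cols x) (encode k cols x')"
    by (auto simp: gen_code_eq_image)
  moreover have "x - x' \<in> vecs k"
    using \<open>x \<in> vecs k\<close> \<open>x' \<in> vecs k\<close> by (rule fvs.subspace_diff [OF subspace_vecs])
  ultimately show ?thesis
    using weight [of "x - x'"] by (simp add: hamming_dist_encode)
qed

definition projective_reps :: "(nat \<Rightarrow> 'a::field) set \<Rightarrow> (nat \<Rightarrow> 'a) list \<Rightarrow> bool" where
  "projective_reps U cols \<longleftrightarrow> set cols \<subseteq> U \<and>
     (\<forall>v\<in>U. \<exists>!j. j < length cols \<and> (\<exists>c. c \<noteq> 0 \<and> cols ! j = fscale c v))"

lemma inj_on_scale_projective_reps:
  assumes reps: "projective_reps U cols" and "0 \<notin> U"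
  shows "inj_on (\<lambda>(j, c). fscale c (cols ! j)) ({..<length cols} \<times> (UNIV - {0}))"
proof (rule inj_onI)
  fix x y assume "x \<in> {..<length cols} \<times> (UNIV - {0})" "y \<in> {..<length cols} \<times> (UNIV - {0})"
    and eq_xy: "(\<lambda>(j, c). fscale c (cols ! j)) x = (\<lambda>(j, c). fscale c (cols ! j)) y"
  then obtain j c j' c' where xy: "x = (j, c)" "y = (j', c')"
    and j: "j < length cols" "j' < length cols" and c: "c \<noteq> 0" "c' \<noteq> 0"
    by auto
  from eq_xy have eq: "fscale c (cols ! j) = fscale c' (cols ! j')"
    by (simp add: xy)
  let ?v = "cols ! j"
  have v: "?v \<in> U"
    using reps j(1) by (auto simp: projective_reps_def)
  then have "\<exists>!i. i < length cols \<and> (\<exists>a. a \<noteq> 0 \<and> cols ! i = fscale a ?v)"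
    using reps by (simp add: projective_reps_def)
  moreover have "cols ! j' = fscale (c / c') ?v" "c / c' \<noteq> 0"
    using eq c by (simp_all add: fscale_def fun_eq_iff field_simps)
  moreover have "cols ! j = fscale 1 ?v"
    by simp
  ultimately have "j = j'"
    using j by (metis one_neq_zero)
  moreover have "?v \<noteq> 0"
    using v \<open>0 \<notin> U\<close> by auto
  ultimately show "x = y"
    using eq by (simp add: xy)
qed

lemma card_projective_reps_filter:
  fixes U :: "(nat \<Rightarrow> 'a::{field,finite}) set"
  assumes reps: "projective_reps U cols" and "0 \<notin> U"
    and scale_U: "\<And>c v. c \<noteq> 0 \<Longrightarrow> v \<in> U \<Longrightarrow> fscale c v \<in> U"
    and scale_P: "\<And>c v. c \<noteq> 0 \<Longrightarrow> P (fscale c v) \<longleftrightarrow> P v"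
  shows "card {v\<in>U. P v} = card {j. j < length cols \<and> P (cols ! j)} * (CARD('a) - 1)"
proof -
  let ?J = "{j. j < length cols \<and> P (cols ! j)}"
  define g where "g = (\<lambda>(j, c). fscale c (cols ! j))"
  have "bij_betw g (?J \<times> (UNIV - {0})) {v\<in>U. P v}"
  proof (rule bij_betw_imageI)
    show "inj_on g (?J \<times> (UNIV - {0}))"
      using inj_on_scale_projective_reps [OF reps \<open>0 \<notin> U\<close>] unfolding g_def
      by (rule inj_on_subset) auto
    show "g ` (?J \<times> (UNIV - {0})) = {v\<in>U. P v}"
    proof (intro equalityI subsetI)
      fix v assume "v \<in> {v\<in>U. P v}"
      then obtain j d where j: "j < length cols" and d: "d \<noteq> 0" "cols ! j = fscale d v"
        and "P v"
        using reps by (auto simp: projective_reps_def)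
      then have "g (j, inverse d) = v" "P (cols ! j)"
        by (simp_all add: g_def scale_P)
      with j d show "v \<in> g ` (?J \<times> (UNIV - {0}))"
        by (intro image_eqI [of _ _ "(j, inverse d)"]) auto
    qed (use reps in \<open>auto simp: g_def projective_reps_def scale_P intro!: scale_U\<close>)
  qed
  then show ?thesis
    by (simp add: bij_betw_same_card [symmetric] card_cartesian_product card_Diff_singleton)
qed

lemma card_UN_sunflower:
  assumes "finite I" "I \<noteq> {}" "\<And>i. i \<in> I \<Longrightarrow> finite (A i)"
    and core: "\<And>i. i \<in> I \<Longrightarrow> C \<subseteq> A i"
    and petals: "\<And>i j. i \<in> I \<Longrightarrow> j \<in> I \<Longrightarrow> i \<noteq> j \<Longrightarrow> A i \<inter> A j = C"
  shows "card (\<Union>i\<in>I. A i) = card C + (\<Sum>i\<in>I. card (A i) - card C)"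
proof -
  obtain i where "i \<in> I"
    using \<open>I \<noteq> {}\<close> by blast
  with core have C: "C \<subseteq> (\<Union>i\<in>I. A i)"
    by blast
  have fin: "finite (\<Union>i\<in>I. A i)" "finite C"
    using assms(1,3) C by (auto intro: finite_subset)
  have "card (\<Union>i\<in>I. A i) = card C + card ((\<Union>i\<in>I. A i) - C)"
    using C fin by (simp add: card_Diff_subset card_mono)
  also have "(\<Union>i\<in>I. A i) - C = (\<Union>i\<in>I. A i - C)"
    by blast
  also have "card (\<Union>i\<in>I. A i - C) = (\<Sum>i\<in>I. card (A i - C))"
  proof (rule card_UN_disjoint)
    show "\<forall>i\<in>I. \<forall>j\<in>I. i \<noteq> j \<longrightarrow> (A i - C) \<inter> (A j - C) = {}"
      using petals by blast
  qed (use assms(1,3) in auto)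
  also have "\<dots> = (\<Sum>i\<in>I. card (A i) - card C)"
    using core fin by (intro sum.cong) (simp_all add: card_Diff_subset)
  finally show ?thesis .
qed

locale complement_code =
  fixes k :: nat and X :: "(nat \<Rightarrow> 'a::{field,finite}) set" and cols :: "(nat \<Rightarrow> 'a) list"
  assumes X_subset: "X \<subseteq> vecs k" and zero_in_X: "0 \<in> X"
    and scale_X: "\<And>c v. c \<noteq> 0 \<Longrightarrow> v \<in> X \<Longrightarrow> fscale c v \<in> X"
    and reps: "projective_reps (vecs k - X) cols"
begin

lemma card_complement_filter:
  assumes "\<And>c v. c \<noteq> 0 \<Longrightarrow> P (fscale c v) \<longleftrightarrow> P v"
  shows "card {v\<in>vecs k - X. P v} = card {j. j < length cols \<and> P (cols ! j)} * (CARD('a) - 1)"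
proof (rule card_projective_reps_filter [OF reps _ _ assms])
  show "0 \<notin> vecs k - X"
    using zero_in_X by simp
  fix c :: 'a and v assume "c \<noteq> 0" "v \<in> vecs k - X"
  moreover have "fscale (inverse c) (fscale c v) = v"
    using \<open>c \<noteq> 0\<close> by simp
  ultimately show "fscale c v \<in> vecs k - X"
    using scale_X [of "inverse c" "fscale c v"] fvs.subspace_scale [OF subspace_vecs] by auto
qed

lemma length_cols: "real (length cols) = (real CARD('a) ^ k - real (card X)) / (real CARD('a) - 1)"
proof -
  have "card (vecs k - X) + card X = CARD('a) ^ k"
    using X_subset card_vecs [of k, where 'a='a] finite_vecs [of k, where 'a='a]
    by (metis card_Diff_subset card_mono finite_subset le_add_diff_inverse2)
  then have "length cols * (CARD('a) - 1) + card X = CARD('a) ^ k"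
    using card_complement_filter [of "\<lambda>_. True"] by (simp add: set_diff_eq)
  from arg_cong [OF this, of real]
  have "real (length cols) * (real CARD('a) - 1) + real (card X) = real CARD('a) ^ k"
    using two_le_card_field [where 'a='a] by (simp add: of_nat_diff)
  then show ?thesis
    using two_le_card_field [where 'a='a] by (simp add: field_simps)
qed

lemma weight_encode:
  assumes "y \<in> vecs k" "y \<noteq> 0"
  shows "card {j. j < length cols \<and> dot k y (cols ! j) \<noteq> 0} * (CARD('a) - 1) +
           card {v\<in>X. dot k y v \<noteq> 0} = (CARD('a) - 1) * CARD('a) ^ (k - 1)"
proof -
  have "{v\<in>vecs k. dot k y v \<noteq> 0} = {v\<in>vecs k - X. dot k y v \<noteq> 0} \<union> {v\<in>X. dot k y v \<noteq> 0}"
    using X_subset by blast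
  then have "card {v\<in>vecs k. dot k y v \<noteq> 0} =
      card {v\<in>vecs k - X. dot k y v \<noteq> 0} + card {v\<in>X. dot k y v \<noteq> 0}"
    using X_subset finite_vecs [of k, where 'a='a]
    by (simp add: card_Un_disjoint [symmetric] finite_subset disjoint_iff)
  moreover have "card {v\<in>vecs k - X. dot k y v \<noteq> 0} =
      card {j. j < length cols \<and> dot k y (cols ! j) \<noteq> 0} * (CARD('a) - 1)"
    by (rule card_complement_filter) (simp add: dot_scale_right)
  ultimately show ?thesis
    using card_nonvanishing_dot_vecs [OF assms] by simp
qed

lemma inj_on_encode:
  assumes "card X \<le> (CARD('a) - 1) * CARD('a) ^ (k - 1)"
  shows "inj_on (encode k cols) (vecs k)"
  unfolding inj_on_encode_iff
proof (intro ballI impI)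
  fix y :: "nat \<Rightarrow> 'a" assume y: "y \<in> vecs k" "y \<noteq> 0"
  have "{v\<in>X. dot k y v \<noteq> 0} \<subseteq> X - {0}"
    by (auto simp: dot_def)
  moreover have "finite X"
    using X_subset finite_vecs by (rule finite_subset)
  ultimately have "card {v\<in>X. dot k y v \<noteq> 0} < card X"
    using zero_in_X by (meson card_Diff1_less card_mono finite_Diff order_le_less_trans)
  then have "0 < card {j. j < length cols \<and> dot k y (cols ! j) \<noteq> 0} * (CARD('a) - 1)"
    using weight_encode [OF y] assms by linarith
  then have "{j. j < length cols \<and> dot k y (cols ! j) \<noteq> 0} \<noteq> {}"
    by (metis card.empty mult_is_0 less_irrefl)
  then show "\<exists>j<length cols. dot k y (cols ! j) \<noteq> 0"
    by blast
qed

lemma dim_min_dist_gen_code: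
  assumes "k \<noteq> 0" and small: "int (card X) - 1 < int CARD('a) ^ k - int CARD('a) ^ (k - 1)"
    and X_weight: "\<And>y. card {v\<in>X. dot k y v \<noteq> 0} \<le> (CARD('a) - 1) * B"
  shows "fvs.dim (gen_code k cols) = k"
    and "int (CARD('a) ^ (k - 1)) - int B \<le> int (min_dist (length cols) (gen_code k cols))"
proof -
  have "int CARD('a) ^ k = int CARD('a) * int CARD('a) ^ (k - 1)"
    using \<open>k \<noteq> 0\<close> by (simp flip: power_Suc)
  with small have "int (card X) \<le> int ((CARD('a) - 1) * CARD('a) ^ (k - 1))"
    using two_le_card_field [where 'a='a] by (simp add: of_nat_diff algebra_simps)
  then have inj: "inj_on (encode k cols) (vecs k)"
    by (intro inj_on_encode) (simp only: of_nat_le_iff)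
  then show "fvs.dim (gen_code k cols) = k"
    by (rule dim_gen_code)
  show "int (CARD('a) ^ (k - 1)) - int B \<le> int (min_dist (length cols) (gen_code k cols))"
  proof (rule min_dist_gen_code_ge [OF \<open>k \<noteq> 0\<close> inj])
    fix y :: "nat \<Rightarrow> 'a" assume "y \<in> vecs k" "y \<noteq> 0"
    let ?w = "card {j. j < length cols \<and> dot k y (cols ! j) \<noteq> 0}"
    have "(CARD('a) - 1) * CARD('a) ^ (k - 1) = ?w * (CARD('a) - 1) + card {v\<in>X. dot k y v \<noteq> 0}"
      using weight_encode [OF \<open>y \<in> vecs k\<close> \<open>y \<noteq> 0\<close>] by simp
    also have "\<dots> \<le> (CARD('a) - 1) * (?w + B)"
      using X_weight [of y] by (simp add: distrib_left mult.commute)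
    finally have "CARD('a) ^ (k - 1) \<le> ?w + B"
      using two_le_card_field [where 'a='a] by simp
    then show "int (CARD('a) ^ (k - 1)) - int B \<le> int ?w"
      by linarith
  qed
qed

end

locale subspace_sunflower =
  fixes k h :: nat and W :: "nat \<Rightarrow> (nat \<Rightarrow> 'a::{field,finite}) set"
  assumes two_le_h: "2 \<le> h"
    and subspace_W: "\<And>i. i \<le> h \<Longrightarrow> fvs.subspace (W i)"
    and W_subset: "\<And>i. i \<le> h \<Longrightarrow> W i \<subseteq> vecs k"
    and W_inter: "\<And>i j. i \<in> {1..h} \<Longrightarrow> j \<in> {1..h} \<Longrightarrow> i \<noteq> j \<Longrightarrow> W i \<inter> W j = W 0"
begin

abbreviation W_union :: "(nat \<Rightarrow> 'a) set" where
  "W_union \<equiv> \<Union>i\<in>{1..h}. W i"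

lemma finite_W: "i \<le> h \<Longrightarrow> finite (W i)"
  using W_subset finite_vecs by (rule finite_subset)

lemma core_subset:
  assumes "i \<in> {1..h}"
  shows "W 0 \<subseteq> W i"
proof -
  define j where "j = (if i = 1 then 2 else 1 :: nat)"
  have "j \<in> {1..h}" "j \<noteq> i"
    using two_le_h assms by (auto simp: j_def)
  then show ?thesis
    using W_inter assms by blast
qed

lemma zero_in_W_union: "0 \<in> W_union"
  using subspace_W [of 1] two_le_h by (auto intro: fvs.subspace_0)

lemma card_W_union:
  "int (card W_union) =
     int CARD('a) ^ fvs.dim (W 0) + (\<Sum>i=1..h. int CARD('a) ^ fvs.dim (W i) - int CARD('a) ^ fvs.dim (W 0))"
proof -
  have "card W_union = card (W 0) + (\<Sum>i=1..h. card (W i) - card (W 0))"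
  proof (rule card_UN_sunflower)
    show "finite {1..h}" "{1..h} \<noteq> {}"
      using two_le_h by auto
    show "finite (W i)" "W 0 \<subseteq> W i" if "i \<in> {1..h}" for i
      using finite_W core_subset that by auto
  qed (rule W_inter)
  moreover have "card (W 0) \<le> card (W i)" if "i \<in> {1..h}" for i
    using core_subset finite_W that by (intro card_mono) auto
  moreover have "card (W i) = CARD('a) ^ fvs.dim (W i)" if "i \<le> h" for i
    using card_subspace [OF subspace_W [OF that] finite_W [OF that]] .
  ultimately show ?thesis
    by (simp add: of_nat_diff)
qed

lemma complement_code_W_union:
  assumes "projective_reps (vecs k - W_union) cols"
  shows "complement_code k W_union cols"
proof
  show "W_union \<subseteq> vecs k"
    using W_subset by force
  show "0 \<in> W_union"
    by (rule zero_in_W_union)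
  show "fscale c v \<in> W_union" if v: "v \<in> W_union" for c v
  proof -
    obtain i where "i \<in> {1..h}" "v \<in> W i"
      using v by blast
    then show ?thesis
      using fvs.subspace_scale [OF subspace_W] by fastforce
  qed
qed (rule assms)

lemma card_nonvanishing_dot_W_union_le:
  "card {v\<in>W_union. dot k y v \<noteq> 0} \<le> (CARD('a) - 1) * (\<Sum>i=1..h. CARD('a) ^ (fvs.dim (W i) - 1))"
  using card_nonvanishing_dot_UN_le [of "{1..h}" W k y] subspace_W W_subset
  by (simp add: sum_distrib_left)

end

theorem theorem3p1:
  fixes q k h :: nat
    and u :: "nat \<Rightarrow> nat"
    and W :: "nat \<Rightarrow> (nat \<Rightarrow> 'a::{field,finite}) set"
    and cols :: "(nat \<Rightarrow> 'a) list"
  assumes q: "q = card (UNIV :: 'a set)"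
    and k: "k \<ge> 3" and h: "h \<ge> 2"
    and u0: "1 \<le> u 0" and u01: "u 0 < u 1"
    and umono: "\<forall>i. 1 \<le> i \<and> i < h \<longrightarrow> u i \<le> u (Suc i)"
    and Wsub: "\<forall>i\<le>h. fvs.subspace (W i) \<and> W i \<subseteq> vecs k"
    and Wdim: "\<forall>i\<le>h. fvs.dim (W i) = u i"
    and Wint: "\<forall>i\<in>{1..h}. \<forall>j\<in>{1..h}. i \<noteq> j \<longrightarrow> W i \<inter> W j = W 0"
    and ineq: "int q ^ k - int q ^ (k - 1) >
                 int q ^ u 0 - 1 + (\<Sum>i=1..h. int q ^ u i - int q ^ u 0)"
    and cols_in: "\<forall>c\<in>set cols. c \<in> {v \<in> vecs k. v \<noteq> 0 \<and> (\<forall>i\<in>{1..h}. v \<notin> W i)}"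
    and cols_rep: "\<forall>v\<in>{v \<in> vecs k. v \<noteq> 0 \<and> (\<forall>i\<in>{1..h}. v \<notin> W i)}.
                     \<exists>!j. j < length cols \<and> (\<exists>c::'a. c \<noteq> 0 \<and> cols ! j = fscale c v)"
  shows "real (length cols) =
           ((real q ^ k - real q ^ u 0) - (\<Sum>i=1..h. real q ^ u i - real q ^ u 0)) / (real q - 1)
         \<and> fvs.subspace (gen_code k cols)
         \<and> fvs.dim (gen_code k cols) = k
         \<and> int (min_dist (length cols) (gen_code k cols)) \<ge>
             int q ^ (k - 1) - (\<Sum>i=1..h. int q ^ (u i - 1))"
proof -
  interpret subspace_sunflower k h W
    using h Wsub Wint by unfold_locales auto
  have "vecs k - W_union = {v \<in> vecs k. v \<noteq> 0 \<and> (\<forall>i\<in>{1..h}. v \<notin> W i)}"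
    using zero_in_W_union by blast
  then have "projective_reps (vecs k - W_union) cols"
    unfolding projective_reps_def subset_eq using cols_in cols_rep by simp
  then interpret complement_code k W_union cols
    by (rule complement_code_W_union)
  have card_X: "int (card W_union) = int q ^ u 0 + (\<Sum>i=1..h. int q ^ u i - int q ^ u 0)"
    using card_W_union Wdim q h by simp
  from arg_cong [OF this, of real_of_int]
  have "real (card W_union) = real q ^ u 0 + (\<Sum>i=1..h. real q ^ u i - real q ^ u 0)"
    by simp
  moreover have "fvs.dim (gen_code k cols) = k"
    and "int (q ^ (k - 1)) - int (\<Sum>i=1..h. q ^ (u i - 1)) \<le> int (min_dist (length cols) (gen_code k cols))"
    using dim_min_dist_gen_code [OF _ _ card_nonvanishing_dot_W_union_le] k ineq card_X Wdim q by auto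
  ultimately show ?thesis
    using length_cols subspace_gen_code q by (simp add: of_nat_sum)
qed

end
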